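(* Let $l:\mathbb{R}\times\mathbb{R}\to\mathbb{R}$ be doubly convex (jointly convex), i.e. $l(\mu u_1+(1-\mu)u_2,\mu v_1+(1-\mu)v_2)\le\mu\,l(u_1,v_1)+(1-\mu)\,l(u_2,v_2)$ for all $u_i,v_i$ and $\mu\in[0,1]$, and let $f:\mathbb{X}\to\mathbb{R}$ be such that all expected $k$-risks below are finite. Then for all integers $1\le k\le k'$, $$r_k(f,\mathcal{D})\ge r_{k'}(f,\mathcal{D}).$$
   Context: Let $\mathcal{D}$ be a probability distribution on $\mathbb{Z}=\mathbb{X}\times\mathbb{Y}$, $\mathbb{Y}\subset\mathbb{R}$. For a finite family $S$ and function $g$, $\hat{E}_S[g(z)]=\frac{1}{|S|}\sum_{z\in S}g(z)$. The expected $k$-risk is $r_k(f,\mathcal{D})=\mathbb{E}_{S\sim\mathcal{D}^k}\big[l(\hat{E}_S[f(x)],\hat{E}_S[y])\big]$ where $S=(z_1,\dots,z_k)$ consists of $k$ i.i.d. draws from $\mathcal{D}$. *)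

theory Defs
  imports "HOL-Probability.Probability"
begin

definition emp_mean :: "nat \<Rightarrow> (nat \<Rightarrow> 'a) \<Rightarrow> ('a \<Rightarrow> real) \<Rightarrow> real" where
  "emp_mean k S g = (\<Sum>i<k. g (S i)) / real k"

definition doubly_convex :: "(real \<Rightarrow> real \<Rightarrow> real) \<Rightarrow> bool" where
  "doubly_convex l \<longleftrightarrow> (\<forall>u1 u2 v1 v2 \<mu>. 0 \<le> \<mu> \<and> \<mu> \<le> 1 \<longrightarrow>
     l (\<mu> * u1 + (1 - \<mu>) * u2) (\<mu> * v1 + (1 - \<mu>) * v2) \<le> \<mu> * l u1 v1 + (1 - \<mu>) * l u2 v2)"

definition k_loss :: "(real \<Rightarrow> real \<Rightarrow> real) \<Rightarrow> ('x \<Rightarrow> real) \<Rightarrow> nat \<Rightarrow> (nat \<Rightarrow> 'x \<times> real) \<Rightarrow> real" where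
  "k_loss l f k S = l (emp_mean k S (\<lambda>z. f (fst z))) (emp_mean k S snd)"

definition k_risk :: "(real \<Rightarrow> real \<Rightarrow> real) \<Rightarrow> ('x \<Rightarrow> real) \<Rightarrow> ('x \<times> real) measure \<Rightarrow> nat \<Rightarrow> real" where
  "k_risk l f D k = (\<integral>S. k_loss l f k S \<partial>(PiM {..<k} (\<lambda>_. D)))"

end

theory Submission
  imports Defs "HOL-Number_Theory.Cong"
begin

text \<open>Cover a sample of size \<open>n\<close> by the \<open>n\<close> cyclic windows of length \<open>k \<le> n\<close>: every point lies in
  exactly \<open>k\<close> of them, so the empirical means over the whole sample are the averages of the
  empirical means over the windows, and joint convexity of \<open>l\<close> (Jensen) bounds the \<open>n\<close>-loss by
  the average of the \<open>k\<close>-losses of the windows. Each window of an i.i.d. sample is itself an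
  i.i.d. sample of size \<open>k\<close>, so taking expectations gives \<open>r\<^sub>n \<le> r\<^sub>k\<close>.\<close>

lemma inj_on_add_mod: "inj_on (\<lambda>j. (j + i) mod n) {..<(n::nat)}"
proof (rule inj_onI)
  fix a b assume "a \<in> {..<n}" "b \<in> {..<n}" and "(a + i) mod n = (b + i) mod n"
  then have "[a + i = b + i] (mod n)" and "a < n" "b < n"
    by (auto simp: cong_def)
  then show "a = b"
    by (simp add: cong_add_rcancel_nat cong_less_modulus_unique_nat)
qed

lemma bij_betw_add_mod:
  assumes "0 < (n::nat)"
  shows "bij_betw (\<lambda>j. (j + i) mod n) {..<n} {..<n}"
  using assms by (intro bij_betw_imageI inj_on_add_mod endo_inj_surj) auto

lemma sum_add_mod:
  assumes "0 < (n::nat)"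
  shows "(\<Sum>j<n. h ((j + i) mod n)) = (\<Sum>j<n. h j)"
  using sum.reindex_bij_betw[OF bij_betw_add_mod[OF assms]] .

definition cyclic_window :: "nat \<Rightarrow> nat \<Rightarrow> nat \<Rightarrow> (nat \<Rightarrow> 'a) \<Rightarrow> nat \<Rightarrow> 'a" where
  "cyclic_window k n j S = (\<lambda>i\<in>{..<k}. S ((j + i) mod n))"

lemma emp_mean_eq_average_cyclic_windows:
  assumes "1 \<le> k" "k \<le> n"
  shows "emp_mean n S g = (\<Sum>j<n. emp_mean k (cyclic_window k n j S) g) / real n"
proof -
  have "(\<Sum>j<n. emp_mean k (cyclic_window k n j S) g) = (\<Sum>i<k. \<Sum>j<n. g (S ((j + i) mod n))) / real k"
    by (simp add: emp_mean_def cyclic_window_def sum_divide_distrib sum.swap[of _ "{..<k}"])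
  also have "\<dots> = (\<Sum>i<k. \<Sum>j<n. g (S j)) / real k"
    using assms by (simp add: sum_add_mod[where h = "\<lambda>j. g (S j)"])
  finally show ?thesis
    using assms by (simp add: emp_mean_def sum_divide_distrib)
qed

lemma doubly_convex_imp_convex_on:
  assumes "doubly_convex l"
  shows "convex_on UNIV (\<lambda>p. l (fst p) (snd p))"
proof (rule convex_onI[OF _ convex_UNIV])
  fix t :: real and x y :: "real \<times> real" assume "0 < t" "t < 1"
  then show "l (fst ((1 - t) *\<^sub>R x + t *\<^sub>R y)) (snd ((1 - t) *\<^sub>R x + t *\<^sub>R y))
      \<le> (1 - t) * l (fst x) (snd x) + t * l (fst y) (snd y)"
    using assms[unfolded doubly_convex_def, rule_format, of "1 - t" "fst x" "fst y" "snd x" "snd y"]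
    by simp
qed

lemma doubly_convex_average:
  assumes "doubly_convex l" "finite J" "J \<noteq> {}"
  shows "l ((\<Sum>j\<in>J. u j) / real (card J)) ((\<Sum>j\<in>J. v j) / real (card J))
    \<le> (\<Sum>j\<in>J. l (u j) (v j)) / real (card J)"
proof -
  have "card J > 0"
    using assms by (simp add: card_gt_0_iff)
  then have "(\<lambda>p. l (fst p) (snd p)) (\<Sum>j\<in>J. (1 / real (card J)) *\<^sub>R (u j, v j))
      \<le> (\<Sum>j\<in>J. (1 / real (card J)) * (\<lambda>p. l (fst p) (snd p)) (u j, v j))"
    using assms by (intro convex_on_sum[OF _ _ doubly_convex_imp_convex_on]) auto
  then show ?thesis
    by (simp add: fst_sum snd_sum sum_divide_distrib)
qed

lemma k_loss_le_average_cyclic_windows: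
  assumes "doubly_convex l" "1 \<le> k" "k \<le> n"
  shows "k_loss l f n S \<le> (\<Sum>j<n. k_loss l f k (cyclic_window k n j S)) / real n"
proof -
  have "{..<n} \<noteq> {}"
    using assms by (simp add: lessThan_empty_iff)
  from doubly_convex_average[OF assms(1) finite_lessThan this] show ?thesis
    unfolding k_loss_def emp_mean_eq_average_cyclic_windows[OF assms(2,3)] by simp
qed

lemma measurable_cyclic_window:
  assumes "j < n"
  shows "cyclic_window k n j \<in> PiM {..<n} (\<lambda>_. D) \<rightarrow>\<^sub>M PiM {..<k} (\<lambda>_. D)"
  unfolding cyclic_window_def
  using assms by (intro measurable_restrict measurable_component_singleton) auto

lemma distr_cyclic_window:
  assumes "prob_space D" "k \<le> n" "j < n"
  shows "distr (PiM {..<n} (\<lambda>_. D)) (PiM {..<k} (\<lambda>_. D)) (cyclic_window k n j) = PiM {..<k} (\<lambda>_. D)"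
proof -
  have "inj_on (\<lambda>i. (j + i) mod n) {..<k}"
    using inj_on_add_mod[of j n] assms(2) by (simp add: add.commute inj_on_subset)
  then show ?thesis
    using distr_PiM_reindex[of "{..<n}" "\<lambda>_. D" "\<lambda>i. (j + i) mod n" "{..<k}"] assms
    by (simp add: cyclic_window_def[abs_def])
qed

lemma integrable_cyclic_window:
  fixes h :: "(nat \<Rightarrow> 'a) \<Rightarrow> 'b::{banach, second_countable_topology}"
  assumes "prob_space D" "k \<le> n" "j < n" "integrable (PiM {..<k} (\<lambda>_. D)) h"
  shows "integrable (PiM {..<n} (\<lambda>_. D)) (\<lambda>S. h (cyclic_window k n j S))"
  using integrable_distr_eq[OF measurable_cyclic_window[OF assms(3)] borel_measurable_integrable[OF assms(4)]]
    distr_cyclic_window[OF assms(1-3)] assms(4) by simp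

lemma integral_cyclic_window:
  fixes h :: "(nat \<Rightarrow> 'a) \<Rightarrow> 'b::{banach, second_countable_topology}"
  assumes "prob_space D" "k \<le> n" "j < n" "h \<in> borel_measurable (PiM {..<k} (\<lambda>_. D))"
  shows "(\<integral>S. h (cyclic_window k n j S) \<partial>PiM {..<n} (\<lambda>_. D)) = (\<integral>S. h S \<partial>PiM {..<k} (\<lambda>_. D))"
  using integral_distr[OF measurable_cyclic_window[OF assms(3)] assms(4)]
    distr_cyclic_window[OF assms(1-3)] by simp

theorem mainTheorem5:
  fixes l :: "real \<Rightarrow> real \<Rightarrow> real"
    and f :: "'x \<Rightarrow> real"
    and D :: "('x \<times> real) measure"
    and k k' :: nat
  assumes "prob_space D"
    and "doubly_convex l"
    and "1 \<le> k" and "k \<le> k'"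
    and "integrable (PiM {..<k} (\<lambda>_. D)) (k_loss l f k)"
    and "integrable (PiM {..<k'} (\<lambda>_. D)) (k_loss l f k')"
  shows "k_risk l f D k \<ge> k_risk l f D k'"
proof -
  let ?window_loss = "\<lambda>j S. k_loss l f k (cyclic_window k k' j S)"
  have integrable_window: "integrable (PiM {..<k'} (\<lambda>_. D)) (?window_loss j)" if "j < k'" for j
    using integrable_cyclic_window[OF assms(1,4) that assms(5)] .
  have "k_risk l f D k' \<le> (\<integral>S. (\<Sum>j<k'. ?window_loss j S) / real k' \<partial>PiM {..<k'} (\<lambda>_. D))"
    unfolding k_risk_def using assms(6) integrable_window
    by (intro integral_mono k_loss_le_average_cyclic_windows[OF assms(2-4)])
      (auto intro!: integrable_divide integrable_sum)
  also have "\<dots> = (\<Sum>j<k'. \<integral>S. ?window_loss j S \<partial>PiM {..<k'} (\<lambda>_. D)) / real k'"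
    using integrable_window by (simp add: integral_sum)
  also have "\<dots> = k_risk l f D k"
    using integral_cyclic_window[OF assms(1,4) _ borel_measurable_integrable[OF assms(5)]] assms(3,4)
    by (simp add: k_risk_def)
  finally show ?thesis .
qed

end
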